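(* Fix $q\in[1,\infty)$ and let $(\mathcal X,d)$ be a metric space with the $q$-barycenter property (for every $\boldsymbol w\in\Delta^{K-1}$ and $\boldsymbol c\in\mathcal X^K$, $C\mapsto\sum_sw_sd^q(c_s,C)$ attains its minimum). Let $\boldsymbol a=(a_1,\dots,a_K)\in\mathcal X^K$, $\boldsymbol w\in\Delta^{K-1}$, $\alpha\in[0,1]$, and $C_{\boldsymbol a}\in\arg\min_C\sum_sw_sd^q(a_s,C)$. Assume $\boldsymbol b=(b_1,\dots,b_K)\in\mathcal X^K$ satisfies, for all $s$, $d(a_s,C_{\boldsymbol a})=d(a_s,b_s)+d(b_s,C_{\boldsymbol a})$ and $d(b_s,a_s)=(1-\alpha^{1/q})d(a_s,C_{\boldsymbol a})$. Let $C_{\boldsymbol b}\in\arg\min_C\sum_sw_sd^q(b_s,C)$. Then $$\Big\{\sum_{s=1}^Kw_sd^q(b_s,C_{\boldsymbol b})\Big\}^{1/q}=\Big\{\sum_{s=1}^Kw_sd^q(b_s,C_{\boldsymbol a})\Big\}^{1/q}.$$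
   Context: $\Delta^{K-1}$ is the probability simplex in $\mathbb R^K$. *)

theory Defs
  imports "HOL-Analysis.Analysis"
begin

definition prob_simplex :: "nat \<Rightarrow> (nat \<Rightarrow> real) set" where
  "prob_simplex K = {w. (\<forall>s<K. 0 \<le> w s) \<and> (\<Sum>s<K. w s) = 1}"

definition bary_cost :: "real \<Rightarrow> nat \<Rightarrow> (nat \<Rightarrow> real) \<Rightarrow> (nat \<Rightarrow> 'a::metric_space) \<Rightarrow> 'a \<Rightarrow> real" where
  "bary_cost q K w c C = (\<Sum>s<K. w s * (dist (c s) C) powr q)"

definition q_barycenter_property :: "real \<Rightarrow> 'a::metric_space itself \<Rightarrow> bool" where
  "q_barycenter_property q _ \<longleftrightarrow>
     (\<forall>K w (c :: nat \<Rightarrow> 'a). w \<in> prob_simplex K \<longrightarrow>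
        (\<exists>C. \<forall>C'. bary_cost q K w c C \<le> bary_cost q K w c C'))"

definition is_barycenter :: "real \<Rightarrow> nat \<Rightarrow> (nat \<Rightarrow> real) \<Rightarrow> (nat \<Rightarrow> 'a::metric_space) \<Rightarrow> 'a \<Rightarrow> bool" where
  "is_barycenter q K w c C \<longleftrightarrow> (\<forall>C'. bary_cost q K w c C \<le> bary_cost q K w c C')"

end

theory Submission
  imports Defs
begin

text \<open>Write \<open>t = \<alpha> powr (1/q)\<close>, so that each \<open>b\<^sub>s\<close> lies on a geodesic from \<open>a\<^sub>s\<close> to \<open>C\<^sub>a\<close>
  with \<open>d(b\<^sub>s, C\<^sub>a) = t d(a\<^sub>s, C\<^sub>a)\<close>; hence the \<open>b\<close>-cost of \<open>C\<^sub>a\<close> is \<open>t\<^sup>q\<close> times the optimal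
  \<open>a\<close>-cost \<open>A\<close>. Conversely, for any \<open>C\<close> the triangle inequality gives
  \<open>d(a\<^sub>s, C) \<le> (1 - t) d(a\<^sub>s, C\<^sub>a) + t (d(b\<^sub>s, C) / t)\<close>, and convexity of \<open>x \<mapsto> x\<^sup>q\<close> turns
  this into \<open>A \<le> (1 - t) A + t powr (1 - q) \<cdot> (b-cost of C)\<close>, i.e. the \<open>b\<close>-cost of \<open>C\<close> is
  at least \<open>t\<^sup>q A\<close>. So \<open>C\<^sub>a\<close> is itself a barycenter of \<open>b\<close>.\<close>

lemma convex_on_powr_nonneg:
  assumes "1 \<le> p"
  shows "convex_on {0..} (\<lambda>x::real. x powr p)"
proof (rule convex_on_linorderI)
  fix t x y :: real
  assume t: "0 < t" "t < 1" and xy: "x \<in> {0..}" "y \<in> {0..}" "x < y"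
  show "((1 - t) *\<^sub>R x + t *\<^sub>R y) powr p \<le> (1 - t) * x powr p + t * y powr p"
  proof (cases "x = 0")
    case True
    have "t powr p \<le> t powr 1"
      using t assms by (intro powr_mono') auto
    then have "(t * y) powr p \<le> t * y powr p"
      using t xy by (simp add: powr_mult mult_right_mono)
    then show ?thesis
      using True assms by simp
  next
    case False
    then show ?thesis
      using xy t by (intro convex_onD[OF powr_convex[OF assms]]) auto
  qed
qed (simp add: convex_real_interval)

lemma powr_le_convex_split:
  fixes q t x y z :: real
  assumes "1 \<le> q" "0 < t" "t \<le> 1" "0 \<le> x" "0 \<le> y" "0 \<le> z"
    and "x \<le> (1 - t) * y + z"
  shows "x powr q \<le> (1 - t) * y powr q + t powr (1 - q) * z powr q"
proof -
  have "x powr q \<le> ((1 - t) * y + t * (z / t)) powr q"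
    using assms by (intro powr_mono2) auto
  also have "\<dots> \<le> (1 - t) * y powr q + t * (z / t) powr q"
    using convex_onD[OF convex_on_powr_nonneg[OF \<open>1 \<le> q\<close>], of t y "z / t"] assms by simp
  also have "t * (z / t) powr q = t powr (1 - q) * z powr q"
    using assms by (simp add: powr_divide powr_diff)
  finally show ?thesis .
qed

lemma bary_cost_nonneg:
  assumes "\<forall>s<K. 0 \<le> w s"
  shows "0 \<le> bary_cost q K w c C"
  unfolding bary_cost_def using assms by (intro sum_nonneg) auto

lemma bary_cost_scale:
  assumes "0 \<le> t" and "\<forall>s<K. dist (b s) C = t * dist (a s) C"
  shows "bary_cost q K w b C = t powr q * bary_cost q K w a C"
  unfolding bary_cost_def sum_distrib_left
  using assms by (intro sum.cong) (auto simp: powr_mult)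

lemma bary_cost_shrunk_ge:
  fixes a b :: "nat \<Rightarrow> 'a::metric_space"
  assumes q: "1 \<le> q" and t: "0 \<le> t" "t \<le> 1" and w: "\<forall>s<K. 0 \<le> w s"
    and Ca: "is_barycenter q K w a Ca"
    and ab: "\<forall>s<K. dist (a s) (b s) \<le> (1 - t) * dist (a s) Ca"
  shows "t powr q * bary_cost q K w a Ca \<le> bary_cost q K w b C"
proof (cases "t = 0")
  case True
  then show ?thesis
    using bary_cost_nonneg[OF w] q by simp
next
  case False
  with t have "0 < t" by simp
  define A where "A = bary_cost q K w a Ca"
  have pointwise: "dist (a s) C powr q
      \<le> (1 - t) * dist (a s) Ca powr q + t powr (1 - q) * dist (b s) C powr q"
    if "s < K" for s
  proof (rule powr_le_convex_split)
    have "dist (a s) C \<le> dist (a s) (b s) + dist (b s) C"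
      by (rule dist_triangle)
    then show "dist (a s) C \<le> (1 - t) * dist (a s) Ca + dist (b s) C"
      using ab that by force
  qed (use q t \<open>0 < t\<close> in auto)
  have "A \<le> bary_cost q K w a C"
    using Ca unfolding A_def is_barycenter_def by blast
  also have "\<dots> \<le> (\<Sum>s<K. w s * ((1 - t) * dist (a s) Ca powr q
                                    + t powr (1 - q) * dist (b s) C powr q))"
    unfolding bary_cost_def using pointwise w by (intro sum_mono mult_left_mono) auto
  also have "\<dots> = (1 - t) * A + t powr (1 - q) * bary_cost q K w b C"
    unfolding A_def bary_cost_def sum_distrib_left sum.distrib[symmetric]
    by (intro sum.cong) (auto simp: algebra_simps)
  finally have "t * A \<le> t powr (1 - q) * bary_cost q K w b C"
    by (simp add: algebra_simps)
  then have "t powr q * (t * A) \<le> t powr q * (t powr (1 - q) * bary_cost q K w b C)"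
    using t by (intro mult_left_mono) auto
  then have "t * (t powr q * A) \<le> t * bary_cost q K w b C"
    using \<open>0 < t\<close> by (simp add: powr_diff field_simps)
  then show ?thesis
    using \<open>0 < t\<close> unfolding A_def by simp
qed

theorem lemma11:
  fixes q \<alpha> :: real and K :: nat and w :: "nat \<Rightarrow> real"
    and a b :: "nat \<Rightarrow> 'a::metric_space" and Ca Cb :: 'a
  assumes "1 \<le> q"
    and "q_barycenter_property q TYPE('a)"
    and "w \<in> prob_simplex K"
    and "0 \<le> \<alpha>" and "\<alpha> \<le> 1"
    and "is_barycenter q K w a Ca"
    and "\<forall>s<K. dist (a s) Ca = dist (a s) (b s) + dist (b s) Ca"
    and "\<forall>s<K. dist (b s) (a s) = (1 - \<alpha> powr (1/q)) * dist (a s) Ca"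
    and "is_barycenter q K w b Cb"
  shows "(bary_cost q K w b Cb) powr (1/q) = (bary_cost q K w b Ca) powr (1/q)"
proof -
  define t where "t = \<alpha> powr (1/q)"
  have t: "0 \<le> t" "t \<le> 1"
    unfolding t_def using assms(1,4,5) by (auto intro: powr_le1)
  have w: "\<forall>s<K. 0 \<le> w s"
    using assms(3) by (simp add: prob_simplex_def)
  have ab: "\<forall>s<K. dist (a s) (b s) = (1 - t) * dist (a s) Ca"
    using assms(8) by (simp add: t_def dist_commute)
  with assms(7) have "\<forall>s<K. dist (b s) Ca = t * dist (a s) Ca"
    by (auto simp: algebra_simps)
  then have "bary_cost q K w b Ca = t powr q * bary_cost q K w a Ca"
    using t by (intro bary_cost_scale)
  also have "\<dots> \<le> bary_cost q K w b Cb"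
    using ab by (intro bary_cost_shrunk_ge[OF assms(1) t w assms(6)]) auto
  finally have "bary_cost q K w b Ca \<le> bary_cost q K w b Cb" .
  moreover have "bary_cost q K w b Cb \<le> bary_cost q K w b Ca"
    using assms(9) by (simp add: is_barycenter_def)
  ultimately show ?thesis
    by simp
qed

end
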